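(* Assume: (H') for every bounded interval $J\subset I$ there exist a positive $\psi\in C^2(\mathbb R^d)$ with $\psi(x)\to+\infty$ as $|x|\to\infty$ and $\lambda\in\mathbb R$ with $\mathcal A_{-c}(t)\psi-\lambda\psi\le0$ on $J\times\mathbb R^d$; and (H'') for every bounded interval $J\subset I$ there exist a positive $\varphi_J\in C^2(\mathbb R^d)$ with $\varphi_J(x)\to+\infty$ as $|x|\to\infty$ and $M_J>0$ with $\mathcal A(t)\varphi_J\le M_J$ on $J\times\mathbb R^d$. Then for every bounded interval $J\subset I$ and every $R>0$ the family of measures $\{g_{t,s}(x,dy):(t,s,x)\in\Lambda_J\times\overline{B(0,R)}\}$ is tight, i.e., for every $\varepsilon>0$ there is $M>0$ with $g_{t,s}(x,\mathbb R^d\setminus B(0,M))\le\varepsilon$ for all $(t,s,x)\in\Lambda_J\times\overline{B(0,R)}$.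
   Context: Let $d\ge1$, $\alpha\in(0,1)$, $I\subseteq\mathbb R$ either $\mathbb R$ or a right half-line; $\Lambda_J=\{(t,s)\in J\times J:t\ge s\}$. For $t\in I$, $(\mathcal A(t)\psi)(x)=\sum_{i,j}q_{ij}(t,x)D_{ij}\psi(x)+\sum_ib_i(t,x)D_i\psi(x)-c(t,x)\psi(x)$, with: $q_{ij},b_i,c\in C^{\alpha/2,\alpha}_{\rm loc}(I\times\mathbb R^d)$; $\inf c>-\infty$; $Q=(q_{ij})$ symmetric with $\langle Q(t,x)\xi,\xi\rangle\ge\eta(t,x)|\xi|^2$, $\inf\eta>0$; for every bounded interval $J\subset I$ there are positive $\phi_J\in C^2(\mathbb R^d)$ with $\phi_J\to+\infty$ at infinity and $\lambda_J$ with $\mathcal A(t)\phi_J\le\lambda_J\phi_J$ on $J\times\mathbb R^d$. $\mathcal A_{-c}(t)=\mathcal A(t)+c(t,\cdot)$. $G(t,s)$ is the evolution operator on $C_b(\mathbb R^d)$: $G(t,s)f=u_f(t,\cdot)$, $u_f$ the unique solution (bounded on strips, in $C([s,\infty)\times\mathbb R^d)\cap C^{1+\alpha/2,2+\alpha}_{\rm loc}((s,\infty)\times\mathbb R^d)$) of $D_tu=\mathcal A(t)u$, $u(s)=f$. Its Green function $g$ is positive with $(G(t,s)f)(x)=\int g(t,s,x,y)f(y)dy$; $g_{t,s}(x,dy)=g(t,s,x,y)dy$ for $t>s$, $g_{t,t}(x,dy)=\delta_x$. *)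

theory Defs
  imports "HOL-Analysis.Analysis" "HOL-Probability.Probability"
begin

definition pd :: "'d::finite \<Rightarrow> (real^'d \<Rightarrow> real) \<Rightarrow> real^'d \<Rightarrow> real" where
  "pd i f x = deriv (\<lambda>h. f (x + h *\<^sub>R axis i 1)) 0"

definition has_pd :: "'d::finite \<Rightarrow> (real^'d \<Rightarrow> real) \<Rightarrow> real^'d \<Rightarrow> bool" where
  "has_pd i f x \<longleftrightarrow> (\<lambda>h. f (x + h *\<^sub>R axis i 1)) differentiable (at 0)"

definition C2 :: "(real^'d::finite \<Rightarrow> real) \<Rightarrow> bool" where
  "C2 f \<longleftrightarrow> continuous_on UNIV f
     \<and> (\<forall>i x. has_pd i f x) \<and> (\<forall>i. continuous_on UNIV (pd i f))
     \<and> (\<forall>i j x. has_pd i (pd j f) x) \<and> (\<forall>i j. continuous_on UNIV (pd i (pd j f)))"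

definition hoelder_loc :: "real \<Rightarrow> (real \<times> (real^'d::finite)) set \<Rightarrow> (real \<Rightarrow> real^'d \<Rightarrow> real) \<Rightarrow> bool" where
  "hoelder_loc \<alpha> S f \<longleftrightarrow> (\<forall>K. compact K \<and> K \<subseteq> S \<longrightarrow>
     (\<exists>L. \<forall>t x s y. (t, x) \<in> K \<and> (s, y) \<in> K \<longrightarrow>
        \<bar>f t x - f s y\<bar> \<le> L * (\<bar>t - s\<bar> powr (\<alpha> / 2) + norm (x - y) powr \<alpha>)))"

definition dt :: "(real \<Rightarrow> real^'d::finite \<Rightarrow> real) \<Rightarrow> real \<Rightarrow> real^'d \<Rightarrow> real" where
  "dt u t x = deriv (\<lambda>\<tau>. u \<tau> x) t"

definition C12_hoelder_loc :: "real \<Rightarrow> (real \<times> (real^'d::finite)) set \<Rightarrow> (real \<Rightarrow> real^'d \<Rightarrow> real) \<Rightarrow> bool" where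
  "C12_hoelder_loc \<alpha> S u \<longleftrightarrow>
     (\<forall>(t, x) \<in> S. (\<lambda>\<tau>. u \<tau> x) differentiable (at t)
        \<and> (\<forall>i. has_pd i (u t) x) \<and> (\<forall>i j. has_pd i (pd j (u t)) x))
     \<and> continuous_on S (\<lambda>(t, x). u t x)
     \<and> continuous_on S (\<lambda>(t, x). dt u t x)
     \<and> (\<forall>i. continuous_on S (\<lambda>(t, x). pd i (u t) x))
     \<and> (\<forall>i j. continuous_on S (\<lambda>(t, x). pd i (pd j (u t)) x))
     \<and> hoelder_loc \<alpha> S (dt u)
     \<and> (\<forall>i j. hoelder_loc \<alpha> S (\<lambda>t x. pd i (pd j (u t)) x))"

text \<open>The operator A(t) and A_{-c}(t) = A(t) + c(t,.) applied to psi at x.\<close>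
definition Aop :: "(real \<Rightarrow> real^'d \<Rightarrow> real^'d^'d) \<Rightarrow> (real \<Rightarrow> real^'d \<Rightarrow> real^'d)
    \<Rightarrow> (real \<Rightarrow> real^'d \<Rightarrow> real) \<Rightarrow> real \<Rightarrow> (real^'d::finite \<Rightarrow> real) \<Rightarrow> real^'d \<Rightarrow> real" where
  "Aop Q b c t \<psi> x = (\<Sum>i\<in>UNIV. \<Sum>j\<in>UNIV. Q t x $ i $ j * pd i (pd j \<psi>) x)
      + (\<Sum>i\<in>UNIV. b t x $ i * pd i \<psi> x) - c t x * \<psi> x"

definition Aop_mc :: "(real \<Rightarrow> real^'d \<Rightarrow> real^'d^'d) \<Rightarrow> (real \<Rightarrow> real^'d \<Rightarrow> real^'d)
    \<Rightarrow> (real \<Rightarrow> real^'d \<Rightarrow> real) \<Rightarrow> real \<Rightarrow> (real^'d::finite \<Rightarrow> real) \<Rightarrow> real^'d \<Rightarrow> real" where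
  "Aop_mc Q b c t \<psi> x = Aop Q b c t \<psi> x + c t x * \<psi> x"

definition bounded_interval :: "real set \<Rightarrow> bool" where
  "bounded_interval J \<longleftrightarrow> is_interval J \<and> bounded J"

definition Cb :: "(real^'d::finite \<Rightarrow> real) \<Rightarrow> bool" where
  "Cb f \<longleftrightarrow> continuous_on UNIV f \<and> bounded (range f)"

definition is_cauchy_solution ::
  "real \<Rightarrow> (real \<Rightarrow> real^'d \<Rightarrow> real^'d^'d) \<Rightarrow> (real \<Rightarrow> real^'d \<Rightarrow> real^'d)
    \<Rightarrow> (real \<Rightarrow> real^'d \<Rightarrow> real) \<Rightarrow> real \<Rightarrow> (real^'d::finite \<Rightarrow> real)
    \<Rightarrow> (real \<Rightarrow> real^'d \<Rightarrow> real) \<Rightarrow> bool" where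
  "is_cauchy_solution \<alpha> Q b c s f u \<longleftrightarrow>
     continuous_on ({s..} \<times> UNIV) (\<lambda>(t, x). u t x)
     \<and> (\<forall>T. bounded ((\<lambda>(t, x). u t x) ` ({s..T} \<times> UNIV)))
     \<and> C12_hoelder_loc \<alpha> ({s<..} \<times> UNIV) u
     \<and> (\<forall>t x. t > s \<longrightarrow> dt u t x = Aop Q b c t (u t) x)
     \<and> u s = f"

definition gmeas :: "(real \<Rightarrow> real \<Rightarrow> real^'d \<Rightarrow> real^'d \<Rightarrow> real) \<Rightarrow> real \<Rightarrow> real \<Rightarrow> real^'d::finite
    \<Rightarrow> (real^'d) measure" where
  "gmeas g t s x = (if t = s then return lborel x else density lborel (\<lambda>y. ennreal (g t s x y)))"

end

theory Submission
  imports Defs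
begin

text \<open>Only hypothesis (H'') is needed. It gives \<open>\<phi>\<close> tending to infinity with \<open>A(t) \<phi> \<le> K\<close> on \<open>J\<close>.
  For \<open>\<gamma> \<ge> max 0 (- inf c)\<close> the function \<open>a exp (\<gamma> (t - s)) (\<phi> + K (t - s))\<close> is a
  supersolution dominating \<open>f = min 1 (a \<phi>)\<close> at time \<open>s\<close>, so by the maximum principle (which
  rests on \<open>tr (Q D\<^sup>2w) \<le> 0\<close> at a spatial maximum) it dominates \<open>G(t,s) f\<close>. As \<open>f = 1\<close> outside
  a large ball, the mass of \<open>g\<^sub>t\<^sub>,\<^sub>s(x, -)\<close> outside that ball is at most \<open>(G(t,s) f)(x)\<close>, which is
  uniformly small for \<open>|x| \<le> R\<close> and \<open>s \<le> t\<close> in \<open>J\<close> once \<open>a\<close> is small.\<close>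

lemma has_real_derivative_pd:
  assumes "has_pd i F x"
  shows "((\<lambda>h. F (x + h *\<^sub>R axis i 1)) has_real_derivative pd i F x) (at 0)"
  using assms DERIV_deriv_iff_real_differentiable unfolding has_pd_def pd_def by blast

lemma line_derivative_shift:
  fixes F :: "'a::real_normed_vector \<Rightarrow> real"
  assumes "((\<lambda>h. F ((x + h0 *\<^sub>R v) + h *\<^sub>R v)) has_real_derivative D) (at 0)"
  shows "((\<lambda>h. F (x + h *\<^sub>R v)) has_real_derivative D) (at h0)"
proof -
  have "(\<lambda>h. F ((x + h0 *\<^sub>R v) + h *\<^sub>R v)) = (\<lambda>h. F (x + (h + h0) *\<^sub>R v))"
    by (simp add: algebra_simps)
  with assms DERIV_shift[of "\<lambda>h. F (x + h *\<^sub>R v)" D 0 h0] show ?thesis by simp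
qed

lemma MVT_symmetric:
  fixes G :: "real \<Rightarrow> real"
  assumes "\<And>\<tau>. (G has_real_derivative G' \<tau>) (at \<tau>)"
  obtains z where "\<bar>z\<bar> \<le> \<bar>h\<bar>" "G h - G 0 = h * G' z"
proof (cases h "0::real" rule: linorder_cases)
  case less
  from MVT2[OF less, of G G'] assms obtain z where "h < z" "z < 0" "G 0 - G h = (0 - h) * G' z"
    by blast
  then show ?thesis by (intro that[of z]) (auto simp: algebra_simps)
next
  case greater
  from MVT2[OF greater, of G G'] assms obtain z where "0 < z" "z < h" "G h - G 0 = (h - 0) * G' z"
    by blast
  then show ?thesis by (intro that[of z]) auto
qed (use that in auto)

lemma has_real_derivative_axis_increment:
  fixes F :: "real^'d::finite \<Rightarrow> real"
  assumes pd_ex: "\<And>y. has_pd k F y" and pd_cont: "continuous_on UNIV (pd k F)"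
  shows "((\<lambda>h. F (x + h *\<^sub>R v + (h * c) *\<^sub>R axis k 1) - F (x + h *\<^sub>R v))
    has_real_derivative c * pd k F x) (at 0)"
proof -
  define e :: "real^'d" where "e = axis k 1"
  define A where "A h = F (x + h *\<^sub>R v + (h * c) *\<^sub>R e) - F (x + h *\<^sub>R v)" for h
  have "\<exists>z. \<bar>z\<bar> \<le> \<bar>h * c\<bar> \<and> A h = (h * c) * pd k F (x + h *\<^sub>R v + z *\<^sub>R e)" for h
  proof -
    have "((\<lambda>\<tau>. F ((x + h *\<^sub>R v) + \<tau> *\<^sub>R e)) has_real_derivative
        pd k F ((x + h *\<^sub>R v) + \<tau> *\<^sub>R e)) (at \<tau>)" for \<tau>
      unfolding e_def by (rule line_derivative_shift) (simp add: has_real_derivative_pd pd_ex)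
    then show ?thesis
      by (metis (no_types, lifting) A_def MVT_symmetric add.right_neutral scale_zero_left)
  qed
  then obtain z where z: "\<And>h. \<bar>z h\<bar> \<le> \<bar>h * c\<bar>"
    and A_eq: "\<And>h. A h = (h * c) * pd k F (x + h *\<^sub>R v + z h *\<^sub>R e)"
    by metis
  have "((\<lambda>h. h *\<^sub>R v + z h *\<^sub>R e) \<longlongrightarrow> 0) (at (0::real))"
  proof (rule Lim_null_comparison)
    show "\<forall>\<^sub>F h in at 0. norm (h *\<^sub>R v + z h *\<^sub>R e) \<le> \<bar>h\<bar> * (norm v + \<bar>c\<bar>)"
    proof (intro always_eventually allI)
      fix h :: real
      have "norm (h *\<^sub>R v + z h *\<^sub>R e) \<le> \<bar>h\<bar> * norm v + \<bar>z h\<bar>"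
        using norm_triangle_ineq[of "h *\<^sub>R v" "z h *\<^sub>R e"] by (simp add: e_def)
      with z[of h] show "norm (h *\<^sub>R v + z h *\<^sub>R e) \<le> \<bar>h\<bar> * (norm v + \<bar>c\<bar>)"
        by (simp add: abs_mult algebra_simps)
    qed
  qed (auto intro!: tendsto_eq_intros)
  then have to_x: "((\<lambda>h. x + h *\<^sub>R v + z h *\<^sub>R e) \<longlongrightarrow> x) (at 0)"
    using tendsto_add[OF tendsto_const[of x]] by (force simp: add.assoc)
  have "isCont (pd k F) x"
    using pd_cont by (simp add: continuous_on_eq_continuous_at)
  from isCont_tendsto_compose[OF this to_x]
  have "((\<lambda>h. c * pd k F (x + h *\<^sub>R v + z h *\<^sub>R e)) \<longlongrightarrow> c * pd k F x) (at 0)"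
    by (rule tendsto_mult_left)
  moreover have "\<forall>\<^sub>F h in at 0. c * pd k F (x + h *\<^sub>R v + z h *\<^sub>R e) = (A h - A 0) / (h - 0)"
    by (simp add: eventually_at_filter A_eq)
  ultimately have "(A has_real_derivative c * pd k F x) (at 0)"
    unfolding has_field_derivative_iff by (rule Lim_transform_eventually)
  then show ?thesis unfolding A_def[abs_def] e_def .
qed

text \<open>Induction on the coordinates in which \<open>\<xi>\<close> may be nonzero, splitting off one axis
  increment at a time.\<close>

lemma has_real_derivative_along_support:
  fixes F :: "real^'d::finite \<Rightarrow> real"
  assumes pd_ex: "\<And>i y. has_pd i F y" and pd_cont: "\<And>i. continuous_on UNIV (pd i F)"
    and "finite S" and "\<forall>i. i \<notin> S \<longrightarrow> \<xi>$i = 0"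
  shows "((\<lambda>h. F (x + h *\<^sub>R \<xi>)) has_real_derivative (\<Sum>i\<in>S. \<xi>$i * pd i F x)) (at 0)"
  using assms(3,4)
proof (induction S arbitrary: \<xi>)
  case empty
  then have "\<xi> = 0" by (simp add: vec_eq_iff)
  then show ?case by simp
next
  case (insert k S \<xi>)
  define \<xi>' where "\<xi>' = \<xi> - (\<xi>$k) *\<^sub>R axis k 1"
  have "(\<Sum>i\<in>S. \<xi>'$i * pd i F x) = (\<Sum>i\<in>S. \<xi>$i * pd i F x)"
    using insert.hyps by (intro sum.cong) (auto simp: \<xi>'_def axis_def)
  moreover have "\<forall>i. i \<notin> S \<longrightarrow> \<xi>'$i = 0"
    using insert.prems by (auto simp: \<xi>'_def axis_def)
  ultimately have "((\<lambda>h. F (x + h *\<^sub>R \<xi>')) has_real_derivative (\<Sum>i\<in>S. \<xi>$i * pd i F x)) (at 0)"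
    using insert.IH[of \<xi>'] by simp
  from DERIV_add[OF has_real_derivative_axis_increment[OF pd_ex pd_cont, of x \<xi>' "\<xi>$k"] this]
  have "((\<lambda>h. F (x + h *\<^sub>R \<xi>' + (h * \<xi>$k) *\<^sub>R axis k 1)) has_real_derivative
      \<xi>$k * pd k F x + (\<Sum>i\<in>S. \<xi>$i * pd i F x)) (at 0)"
    by simp
  moreover have "x + h *\<^sub>R \<xi>' + (h * \<xi>$k) *\<^sub>R axis k 1 = x + h *\<^sub>R \<xi>" for h
    by (simp add: \<xi>'_def algebra_simps)
  ultimately show ?case using insert.hyps by simp
qed

lemma has_real_derivative_along_line:
  fixes F :: "real^'d::finite \<Rightarrow> real"
  assumes "\<And>i y. has_pd i F y" and "\<And>i. continuous_on UNIV (pd i F)"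
  shows "((\<lambda>h. F (x + h *\<^sub>R \<xi>)) has_real_derivative (\<Sum>i\<in>UNIV. \<xi>$i * pd i F (x + h0 *\<^sub>R \<xi>))) (at h0)"
  by (rule line_derivative_shift, rule has_real_derivative_along_support) (use assms in auto)

definition quad_form :: "('d::finite \<Rightarrow> 'd \<Rightarrow> real) \<Rightarrow> ('d \<Rightarrow> real) \<Rightarrow> real" where
  "quad_form M \<xi> = (\<Sum>i\<in>UNIV. \<Sum>j\<in>UNIV. \<xi> i * \<xi> j * M i j)"

definition delta :: "'d \<Rightarrow> 'd \<Rightarrow> real" where
  "delta k i = (if i = k then 1 else 0)"

lemma sum_delta_mult: "(\<Sum>i\<in>UNIV. delta k i * Y i) = Y (k::'d::finite)"
proof -
  have "(\<Sum>i\<in>UNIV. delta k i * Y i) = (\<Sum>i\<in>UNIV. if k = i then Y i else 0)"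
    by (intro sum.cong) (auto simp: delta_def)
  then show ?thesis by simp
qed

lemma quad_form_add_delta:
  "quad_form P (\<lambda>i. \<xi> i + \<tau> * delta k i) =
     quad_form P \<xi> + \<tau> * (\<Sum>i\<in>UNIV. \<xi> i * P i k) + \<tau> * (\<Sum>j\<in>UNIV. \<xi> j * P k j) + \<tau>\<^sup>2 * P k k"
proof -
  have expand: "(\<xi> i + \<tau> * delta k i) * (\<xi> j + \<tau> * delta k j) * P i j =
     \<xi> i * \<xi> j * P i j + \<tau> * (delta k i * (\<xi> j * P i j)) + \<tau> * (delta k j * (\<xi> i * P i j))
     + \<tau>\<^sup>2 * (delta k i * (delta k j * P i j))" for i j
    by (simp add: algebra_simps power2_eq_square)
  have "quad_form P (\<lambda>i. \<xi> i + \<tau> * delta k i) = quad_form P \<xi>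
      + \<tau> * (\<Sum>i\<in>UNIV. delta k i * (\<Sum>j\<in>UNIV. \<xi> j * P i j))
      + \<tau> * (\<Sum>i\<in>UNIV. \<Sum>j\<in>UNIV. delta k j * (\<xi> i * P i j))
      + \<tau>\<^sup>2 * (\<Sum>i\<in>UNIV. delta k i * (\<Sum>j\<in>UNIV. delta k j * P i j))"
    unfolding quad_form_def expand by (simp add: sum.distrib sum_distrib_left)
  then show ?thesis by (simp add: sum_delta_mult)
qed

lemma quad_form_delta: "quad_form P (delta k) = P k k"
  using quad_form_add_delta[of P "\<lambda>_. 0" 1 k] by (simp add: quad_form_def)

lemma affine_nonneg_imp_slope_eq_0:
  fixes A B :: real
  assumes "\<And>\<tau>. A + \<tau> * B \<ge> 0"
  shows "B = 0"
proof (rule ccontr)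
  assume "B \<noteq> 0"
  with assms[of "- (\<bar>A\<bar> + 1) / B"] show False by simp
qed

lemma psd_diag_eq_0_imp_column_eq_0:
  assumes P_sym: "\<And>i j. P i j = P j i" and P_psd: "\<And>\<xi>. quad_form P \<xi> \<ge> 0" and "P k k = 0"
  shows "P j k = 0"
proof -
  have "P j j + \<tau> * (2 * P j k) \<ge> 0" for \<tau>
    using P_psd[of "\<lambda>i. delta j i + \<tau> * delta k i"] \<open>P k k = 0\<close> P_sym[of k j]
    unfolding quad_form_add_delta quad_form_delta sum_delta_mult by (simp add: algebra_simps)
  then show ?thesis using affine_nonneg_imp_slope_eq_0 by fastforce
qed

lemma schur_complement_psd:
  assumes P_sym: "\<And>i j. P i j = P j i" and P_psd: "\<And>\<xi>. quad_form P \<xi> \<ge> 0" and "P k k > 0"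
  shows "quad_form (\<lambda>i j. P i j - P i k * P k j / P k k) \<xi> \<ge> 0"
proof -
  define s where "s = (\<Sum>i\<in>UNIV. \<xi> i * P i k)"
  have s_sym: "(\<Sum>j\<in>UNIV. \<xi> j * P k j) = s"
    unfolding s_def using P_sym by metis
  have "(\<Sum>i\<in>UNIV. \<Sum>j\<in>UNIV. (\<xi> i * P i k) * (\<xi> j * P k j))
      = (\<Sum>i\<in>UNIV. \<xi> i * P i k) * (\<Sum>j\<in>UNIV. \<xi> j * P k j)"
    by (simp add: sum_product)
  also have "\<dots> = s * s" by (simp add: s_sym s_def)
  finally have schur_eq:
      "quad_form (\<lambda>i j. P i j - P i k * P k j / P k k) \<xi> = quad_form P \<xi> - s * s / P k k"
    unfolding quad_form_def by (simp add: algebra_simps sum_subtractf sum_divide_distrib[symmetric])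
  have "quad_form P (\<lambda>i. \<xi> i + (- s / P k k) * delta k i) \<ge> 0" by (rule P_psd)
  then have "quad_form P \<xi> + (- s / P k k) * s + (- s / P k k) * s + (- s / P k k)\<^sup>2 * P k k \<ge> 0"
    unfolding quad_form_add_delta s_sym s_def[symmetric] .
  with \<open>P k k > 0\<close> show ?thesis
    unfolding schur_eq by (simp add: field_simps power2_eq_square)
qed

text \<open>Induction on the support of \<open>P\<close>: a positive diagonal entry \<open>P k k\<close> is removed by the
  Schur complement, which vanishes on row and column \<open>k\<close>; the discarded part contributes
  \<open>quad_form Q (P \<cdot> k) / P k k \<ge> 0\<close> to the trace.\<close>

lemma trace_mult_nonneg_on_support:
  fixes Q P :: "'d::finite \<Rightarrow> 'd \<Rightarrow> real"
  assumes Q_psd: "\<And>\<xi>. quad_form Q \<xi> \<ge> 0"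
    and "finite S" and "\<forall>i j. P i j = P j i" and "\<forall>\<xi>. quad_form P \<xi> \<ge> 0"
    and "\<forall>i j. P i j \<noteq> 0 \<longrightarrow> i \<in> S"
  shows "(\<Sum>i\<in>UNIV. \<Sum>j\<in>UNIV. Q i j * P i j) \<ge> 0"
  using assms(2-)
proof (induction S arbitrary: P)
  case empty
  then show ?case by simp
next
  case (insert k S P)
  have P_sym: "\<And>i j. P i j = P j i" and P_psd: "\<And>\<xi>. quad_form P \<xi> \<ge> 0"
    using insert.prems by auto
  have "P k k \<ge> 0" using P_psd[of "delta k"] by (simp add: quad_form_delta)
  show ?case
  proof (cases "P k k = 0")
    case True
    then have "\<forall>i j. P i j \<noteq> 0 \<longrightarrow> i \<in> S"
      using psd_diag_eq_0_imp_column_eq_0[OF P_sym P_psd] insert.prems(3) P_sym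
      by (metis insert_iff)
    then show ?thesis using insert.IH P_sym P_psd by blast
  next
    case False
    with \<open>P k k \<ge> 0\<close> have "P k k > 0" by simp
    define P' where "P' i j = P i j - P i k * P k j / P k k" for i j
    have "\<forall>i j. P' i j \<noteq> 0 \<longrightarrow> i \<in> S"
    proof (intro allI impI)
      fix i j
      assume "P' i j \<noteq> 0"
      moreover have "P' k j = 0" using \<open>P k k > 0\<close> by (simp add: P'_def)
      ultimately have "i \<noteq> k" and "P i j \<noteq> 0 \<or> P i k \<noteq> 0" by (auto simp: P'_def)
      then show "i \<in> S" using insert.prems(3) by blast
    qed
    moreover have "\<forall>i j. P' i j = P' j i"
      unfolding P'_def using P_sym by (auto simp: algebra_simps)
    moreover have "\<forall>\<xi>. quad_form P' \<xi> \<ge> 0"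
      using schur_complement_psd[OF P_sym P_psd \<open>P k k > 0\<close>] by (simp add: P'_def[abs_def])
    ultimately have "(\<Sum>i\<in>UNIV. \<Sum>j\<in>UNIV. Q i j * P' i j) \<ge> 0"
      using insert.IH by blast
    moreover have "(\<Sum>i\<in>UNIV. \<Sum>j\<in>UNIV. Q i j * P i j) =
        (\<Sum>i\<in>UNIV. \<Sum>j\<in>UNIV. Q i j * P' i j) + quad_form Q (\<lambda>i. P i k) / P k k"
      unfolding P'_def quad_form_def using P_sym
      by (simp add: algebra_simps sum.distrib sum_subtractf sum_divide_distrib)
    moreover have "quad_form Q (\<lambda>i. P i k) / P k k \<ge> 0"
      using Q_psd \<open>P k k > 0\<close> by simp
    ultimately show ?thesis by linarith
  qed
qed

text \<open>\<open>H\<close> is not assumed symmetric: the Hessian built from \<open>pd i (pd j f)\<close> is not known to be.\<close>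

lemma trace_mult_nonpos:
  fixes Q H :: "'d::finite \<Rightarrow> 'd \<Rightarrow> real"
  assumes Q_sym: "\<And>i j. Q i j = Q j i" and Q_psd: "\<And>\<xi>. quad_form Q \<xi> \<ge> 0"
    and H_nsd: "\<And>\<xi>. quad_form H \<xi> \<le> 0"
  shows "(\<Sum>i\<in>UNIV. \<Sum>j\<in>UNIV. Q i j * H i j) \<le> 0"
proof -
  define P where "P i j = - (H i j + H j i) / 2" for i j
  have pair_P: "(\<Sum>i\<in>UNIV. \<Sum>j\<in>UNIV. f i j * P i j) = - (\<Sum>i\<in>UNIV. \<Sum>j\<in>UNIV. f i j * H i j)"
    if f_sym: "\<And>i j. f i j = f j i" for f
  proof -
    have "(\<Sum>i\<in>UNIV. \<Sum>j\<in>UNIV. f i j * H j i) = (\<Sum>i\<in>UNIV. \<Sum>j\<in>UNIV. f i j * H i j)"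
      by (subst sum.swap) (simp add: f_sym)
    moreover have "f i j * P i j = - (f i j * H i j / 2) - f i j * H j i / 2" for i j
      by (simp add: P_def field_simps)
    ultimately show ?thesis
      by (simp add: sum_subtractf sum_negf sum_divide_distrib[symmetric])
  qed
  have "quad_form P \<xi> = - quad_form H \<xi>" for \<xi>
    unfolding quad_form_def by (rule pair_P) simp
  with H_nsd have "\<forall>\<xi>. quad_form P \<xi> \<ge> 0" by simp
  moreover have "\<forall>i j. P i j = P j i" by (simp add: P_def add.commute)
  ultimately have "(\<Sum>i\<in>UNIV. \<Sum>j\<in>UNIV. Q i j * P i j) \<ge> 0"
    using trace_mult_nonneg_on_support[OF Q_psd, of UNIV P] by simp
  then show ?thesis using pair_P[OF Q_sym] by simp
qed

lemma inner_matrix_vector_quad_form: "v \<bullet> (M *v v) = quad_form (\<lambda>i j. M$i$j) (\<lambda>i. v$i)"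
  unfolding quad_form_def inner_vec_def matrix_vector_mult_def
  by (simp add: sum_distrib_left algebra_simps)

lemma C2_max_imp_pd_eq_0:
  assumes "C2 f" and max: "\<And>y. f y \<le> f x0"
  shows "pd i f x0 = 0"
proof (rule DERIV_local_max[OF has_real_derivative_pd zero_less_one])
  show "has_pd i f x0" using \<open>C2 f\<close> unfolding C2_def by blast
  show "\<forall>y. \<bar>0 - y\<bar> < 1 \<longrightarrow> f (x0 + y *\<^sub>R axis i 1) \<le> f (x0 + 0 *\<^sub>R axis i 1)"
    using max by simp
qed

text \<open>Along the line through \<open>x0\<close> in direction \<open>\<xi>\<close> the first derivative vanishes at \<open>0\<close>,
  so a positive second derivative would make \<open>f\<close> increase to the right of \<open>x0\<close>.\<close>

lemma C2_max_imp_hessian_nsd: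
  assumes "C2 f" and max: "\<And>y. f y \<le> f x0"
  shows "quad_form (\<lambda>i j. pd i (pd j f) x0) \<xi> \<le> 0"
proof -
  have pd_ex: "\<And>i y. has_pd i f y" and pd_cont: "\<And>i. continuous_on UNIV (pd i f)"
    and pd2_ex: "\<And>i j y. has_pd i (pd j f) y"
    and pd2_cont: "\<And>i j. continuous_on UNIV (pd i (pd j f))"
    using \<open>C2 f\<close> unfolding C2_def by auto
  define v where "v = (\<chi> i. \<xi> i)"
  define G where "G h = (\<Sum>j\<in>UNIV. v$j * pd j f (x0 + h *\<^sub>R v))" for h
  define D2 where "D2 = (\<Sum>j\<in>UNIV. v$j * (\<Sum>i\<in>UNIV. v$i * pd i (pd j f) (x0 + 0 *\<^sub>R v)))"
  have dG: "(G has_real_derivative D2) (at 0)"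
    unfolding G_def D2_def
    by (intro DERIV_sum DERIV_cmult has_real_derivative_along_line pd2_ex pd2_cont)
  have "D2 \<le> 0"
  proof (rule ccontr)
    assume "\<not> D2 \<le> 0"
    from DERIV_pos_inc_right[OF dG] this obtain d where "d > 0"
      and inc: "\<And>h. 0 < h \<Longrightarrow> h < d \<Longrightarrow> G 0 < G h"
      by force
    have "G 0 = 0" unfolding G_def using C2_max_imp_pd_eq_0[OF \<open>C2 f\<close> max] by simp
    have "((\<lambda>h. f (x0 + h *\<^sub>R v)) has_real_derivative G h) (at h)" for h
      unfolding G_def by (rule has_real_derivative_along_line[OF pd_ex pd_cont])
    from MVT2[of 0 "d / 2", OF _ this] \<open>d > 0\<close> obtain z where z: "0 < z" "z < d / 2"
      and mvt: "f (x0 + (d / 2) *\<^sub>R v) - f (x0 + 0 *\<^sub>R v) = (d / 2 - 0) * G z"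
      by auto
    have "0 < (d / 2) * G z" using inc[of z] z \<open>G 0 = 0\<close> \<open>d > 0\<close> by simp
    with mvt max[of "x0 + (d / 2) *\<^sub>R v"] show False by simp
  qed
  moreover have "D2 = quad_form (\<lambda>i j. pd i (pd j f) x0) \<xi>"
    unfolding D2_def v_def quad_form_def
    by (subst sum.swap) (simp add: sum_distrib_left algebra_simps)
  ultimately show ?thesis by simp
qed

lemma Aop_at_spatial_max:
  fixes w :: "real^'d::finite \<Rightarrow> real"
  assumes "C2 w" and max: "\<And>y. w y \<le> w x0"
    and Q_sym: "\<And>i j. Q t x0 $ i $ j = Q t x0 $ j $ i"
    and Q_psd: "\<And>v. v \<bullet> (Q t x0 *v v) \<ge> 0"
  shows "Aop Q b c t w x0 \<le> - c t x0 * w x0"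
proof -
  have "(\<Sum>i\<in>UNIV. \<Sum>j\<in>UNIV. Q t x0 $ i $ j * pd i (pd j w) x0) \<le> 0"
  proof (rule trace_mult_nonpos)
    show "0 \<le> quad_form (\<lambda>i j. Q t x0 $ i $ j) \<xi>" for \<xi>
      using Q_psd[of "\<chi> i. \<xi> i"] by (simp add: inner_matrix_vector_quad_form)
  qed (use Q_sym C2_max_imp_hessian_nsd[OF \<open>C2 w\<close> max] in auto)
  then show ?thesis
    unfolding Aop_def using C2_max_imp_pd_eq_0[OF \<open>C2 w\<close> max] by simp
qed

lemma positive_max_on_strip:
  fixes Z :: "real \<times> (real^'d::finite) \<Rightarrow> real"
  assumes cont: "continuous_on ({s..T} \<times> UNIV) Z"
    and nonpos_far: "\<And>t x. t \<in> {s..T} \<Longrightarrow> norm x \<ge> r \<Longrightarrow> Z (t, x) \<le> 0"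
    and "t1 \<in> {s..T}" and "Z (t1, x1) > 0"
  obtains t0 x0 where "t0 \<in> {s..T}" "Z (t0, x0) > 0"
    and "\<And>t x. t \<in> {s..T} \<Longrightarrow> Z (t, x) \<le> Z (t0, x0)"
proof -
  define K where "K = {s..T} \<times> cball (0::real^'d) r"
  have "(t1, x1) \<in> K"
    using assms(3,4) nonpos_far[of t1 x1] by (force simp: K_def)
  moreover have "compact K" unfolding K_def by (intro compact_Times compact_Icc compact_cball)
  moreover have "continuous_on K Z" by (rule continuous_on_subset[OF cont]) (auto simp: K_def)
  ultimately obtain p0 where "p0 \<in> K" and max_K: "\<And>q. q \<in> K \<Longrightarrow> Z q \<le> Z p0"
    using continuous_attains_sup[of K Z] by blast
  obtain t0 x0 where p0: "p0 = (t0, x0)" by (cases p0)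
  have "Z (t0, x0) > 0" using max_K[OF \<open>(t1, x1) \<in> K\<close>] assms(4) p0 by simp
  moreover have "Z (t, x) \<le> Z (t0, x0)" if "t \<in> {s..T}" for t x
    using max_K[of "(t, x)"] nonpos_far[OF that, of x] \<open>Z (t0, x0) > 0\<close> p0 that
    by (cases "norm x \<le> r") (auto simp: K_def)
  ultimately show ?thesis using that \<open>p0 \<in> K\<close> p0 by (auto simp: K_def)
qed

text \<open>Multiplying by \<open>exp (- \<beta> (t - s))\<close> with \<open>\<beta> > - inf c\<close> makes the zeroth-order coefficient
  strictly positive, so at a positive maximum the time derivative would be strictly negative.\<close>

lemma parabolic_max_principle:
  fixes w :: "real \<Rightarrow> real^'d::finite \<Rightarrow> real"
  assumes cont: "continuous_on ({s..T} \<times> UNIV) (\<lambda>(t, x). w t x)"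
    and initial: "\<And>x. w s x \<le> 0"
    and nonpos_far: "\<And>t x. t \<in> {s..T} \<Longrightarrow> norm x \<ge> r \<Longrightarrow> w t x \<le> 0"
    and C2: "\<And>t. t \<in> {s<..T} \<Longrightarrow> C2 (w t)"
    and time_diff: "\<And>t x. t \<in> {s<..T} \<Longrightarrow> (\<lambda>\<tau>. w \<tau> x) differentiable (at t)"
    and subsolution: "\<And>t x. t \<in> {s<..T} \<Longrightarrow> dt w t x \<le> Aop Q b c t (w t) x"
    and Q_sym: "\<And>t x i j. t \<in> {s<..T} \<Longrightarrow> Q t x $ i $ j = Q t x $ j $ i"
    and Q_psd: "\<And>t x v. t \<in> {s<..T} \<Longrightarrow> v \<bullet> (Q t x *v v) \<ge> 0"
    and c_below: "\<And>t x. t \<in> {s<..T} \<Longrightarrow> c t x \<ge> c_min"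
    and "t1 \<in> {s..T}"
  shows "w t1 x1 \<le> 0"
proof (rule ccontr)
  assume "\<not> w t1 x1 \<le> 0"
  define \<beta> where "\<beta> = \<bar>c_min\<bar> + 1"
  define Z where "Z t x = exp (- \<beta> * (t - s)) * w t x" for t x
  have "continuous_on ({s..T} \<times> UNIV) (\<lambda>p. exp (- \<beta> * (fst p - s)) * (\<lambda>(t, x). w t x) p)"
    by (intro continuous_intros cont)
  then have "continuous_on ({s..T} \<times> UNIV) (\<lambda>(t, x). Z t x)"
    by (simp add: Z_def case_prod_beta')
  then obtain t0 x0 where t0: "t0 \<in> {s..T}" and "Z t0 x0 > 0"
    and max: "\<And>t x. t \<in> {s..T} \<Longrightarrow> Z t x \<le> Z t0 x0"
    using positive_max_on_strip[of s T "\<lambda>(t, x). Z t x" r t1 x1] nonpos_far \<open>t1 \<in> {s..T}\<close>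
      \<open>\<not> w t1 x1 \<le> 0\<close> by (auto simp: Z_def zero_less_mult_iff mult_nonneg_nonpos)
  then have w_pos: "w t0 x0 > 0" by (simp add: Z_def zero_less_mult_iff)
  with initial[of x0] t0 have t0_in: "t0 \<in> {s<..T}" by (cases "t0 = s") auto
  have "w t0 y \<le> w t0 x0" for y
    using max[OF t0, of y] by (simp add: Z_def)
  from Aop_at_spatial_max[where Q = Q and b = b and c = c, OF C2[OF t0_in] this
      Q_sym[OF t0_in, where x = x0] Q_psd[OF t0_in, where x = x0]]
  have "dt w t0 x0 \<le> - c t0 x0 * w t0 x0"
    using subsolution[OF t0_in, of x0] by simp
  also have "\<dots> \<le> - c_min * w t0 x0"
    using c_below[OF t0_in, of x0] w_pos by (simp add: mult_right_mono)
  finally have dt_le: "dt w t0 x0 \<le> - c_min * w t0 x0" .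
  have "0 < (\<beta> + c_min) * w t0 x0" using w_pos by (intro mult_pos_pos) (auto simp: \<beta>_def)
  with dt_le have "- \<beta> * w t0 x0 + dt w t0 x0 < 0" by (simp add: algebra_simps)
  then have "exp (- \<beta> * (t0 - s)) * (- \<beta> * w t0 x0 + dt w t0 x0) < 0"
    by (simp add: mult_pos_neg)
  moreover have "((\<lambda>\<tau>. Z \<tau> x0) has_real_derivative
      exp (- \<beta> * (t0 - s)) * (- \<beta> * w t0 x0 + dt w t0 x0)) (at t0)"
    using time_diff[OF t0_in, of x0] unfolding Z_def dt_def
    by (auto intro!: derivative_eq_intros simp: DERIV_deriv_iff_real_differentiable algebra_simps)
  ultimately obtain d where "d > 0" and dec: "\<And>h. 0 < h \<Longrightarrow> h < d \<Longrightarrow> Z t0 x0 < Z (t0 - h) x0"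
    using DERIV_neg_dec_left by blast
  define h where "h = min (d / 2) (t0 - s)"
  have "0 < h" "h < d" "t0 - h \<in> {s..T}" using \<open>d > 0\<close> t0_in by (auto simp: h_def)
  with dec[of h] max[of "t0 - h" x0] show False by simp
qed

lemma
  assumes "has_pd i F x" "has_pd i G x"
  shows has_pd_diff_affine: "has_pd i (\<lambda>y. F y - (A * G y + B)) x"
    and pd_diff_affine: "pd i (\<lambda>y. F y - (A * G y + B)) x = pd i F x - A * pd i G x"
proof -
  have deriv: "((\<lambda>h. F (x + h *\<^sub>R axis i 1) - (A * G (x + h *\<^sub>R axis i 1) + B)) has_real_derivative
      pd i F x - (A * pd i G x + 0)) (at 0)"
    using assms by (intro DERIV_diff DERIV_add DERIV_cmult DERIV_const has_real_derivative_pd)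
  then show "has_pd i (\<lambda>y. F y - (A * G y + B)) x"
    unfolding has_pd_def real_differentiable_def by blast
  from DERIV_imp_deriv[OF deriv] show "pd i (\<lambda>y. F y - (A * G y + B)) x = pd i F x - A * pd i G x"
    unfolding pd_def by simp
qed

lemma C2_has_pd:
  assumes "C2 F"
  shows "has_pd i F x" and "has_pd i (pd j F) x"
  using assms unfolding C2_def by auto

lemma pd2_diff_affine:
  assumes "C2 F" "C2 G"
  shows "pd i (pd j (\<lambda>y. F y - (A * G y + B))) x = pd i (pd j F) x - A * pd i (pd j G) x"
proof -
  have pd_eq: "pd j (\<lambda>y. F y - (A * G y + B)) = (\<lambda>y. pd j F y - (A * pd j G y + 0))"
    using pd_diff_affine[OF C2_has_pd(1)[OF assms(1)] C2_has_pd(1)[OF assms(2)]] by auto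
  show ?thesis
    unfolding pd_eq by (rule pd_diff_affine[OF C2_has_pd(2)[OF assms(1)] C2_has_pd(2)[OF assms(2)]])
qed

lemma C2_diff_affine:
  assumes F: "C2 F" and G: "C2 G"
  shows "C2 (\<lambda>y. F y - (A * G y + B))"
proof -
  have pd_eq: "pd j (\<lambda>y. F y - (A * G y + B)) = (\<lambda>y. pd j F y - (A * pd j G y + 0))" for j
    using pd_diff_affine[OF C2_has_pd(1)[OF F] C2_has_pd(1)[OF G]] by auto
  have pd2_eq: "pd i (\<lambda>y. pd j F y - (A * pd j G y + 0))
      = (\<lambda>y. pd i (pd j F) y - A * pd i (pd j G) y)" for i j
    by (intro ext pd_diff_affine C2_has_pd F G)
  show ?thesis
    unfolding C2_def pd_eq pd2_eq
  proof (intro conjI allI)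
    show "has_pd i (\<lambda>y. F y - (A * G y + B)) x" for i x
      by (intro has_pd_diff_affine C2_has_pd F G)
    show "has_pd i (\<lambda>y. pd j F y - (A * pd j G y + 0)) x" for i j x
      by (intro has_pd_diff_affine C2_has_pd F G)
  qed (use F G in \<open>auto simp: C2_def
      intro!: continuous_on_diff continuous_on_add continuous_on_mult_left continuous_on_const\<close>)
qed

lemma Aop_diff_affine:
  assumes "C2 F" "C2 G"
  shows "Aop Q b c t (\<lambda>y. F y - (A * G y + B)) x
    = Aop Q b c t F x - A * Aop Q b c t G x + c t x * B"
proof -
  have pd_eq: "pd i (\<lambda>y. F y - (A * G y + B)) x = pd i F x - A * pd i G x" for i
    by (intro pd_diff_affine C2_has_pd assms)
  show ?thesis
    unfolding Aop_def pd_eq pd2_diff_affine[OF assms]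
    by (simp add: algebra_simps sum_subtractf sum_distrib_left sum.distrib)
qed

lemma continuous_on_slice:
  fixes h :: "real \<Rightarrow> 'a::topological_space \<Rightarrow> real"
  assumes "continuous_on (S \<times> UNIV) (\<lambda>(t, x). h t x)" and "\<tau> \<in> S"
  shows "continuous_on UNIV (h \<tau>)"
proof -
  have "continuous_on UNIV (\<lambda>y. (\<lambda>(t, x). h t x) (\<tau>, y))"
    using assms(2)
    by (intro continuous_on_compose2[OF assms(1)] continuous_on_Pair continuous_on_const
        continuous_on_id) auto
  then show ?thesis by simp
qed

lemma cauchy_solution_C2:
  assumes "is_cauchy_solution \<alpha> Q b c s f U" and "\<tau> > s"
  shows "C2 (U \<tau>)"
proof -
  have \<tau>: "\<tau> \<in> {s<..}" using assms(2) by simp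
  have "continuous_on ({s<..} \<times> UNIV) (\<lambda>(t, x). U t x)"
    and "continuous_on ({s<..} \<times> UNIV) (\<lambda>(t, x). pd i (U t) x)"
    and "continuous_on ({s<..} \<times> UNIV) (\<lambda>(t, x). pd i (pd j (U t)) x)"
    and "\<forall>(t, x) \<in> {s<..} \<times> UNIV. (\<forall>i. has_pd i (U t) x) \<and> (\<forall>i j. has_pd i (pd j (U t)) x)"
    for i j
    using assms(1) unfolding is_cauchy_solution_def C12_hoelder_loc_def by auto
  with \<tau> show ?thesis
    unfolding C2_def by (auto intro: continuous_on_slice[OF _ \<tau>])
qed

lemma cauchy_solution_has_time_derivative:
  assumes "is_cauchy_solution \<alpha> Q b c s f U" and "\<tau> > s"
  shows "((\<lambda>\<sigma>. U \<sigma> x) has_real_derivative Aop Q b c \<tau> (U \<tau>) x) (at \<tau>)"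
proof -
  have "(\<lambda>\<sigma>. U \<sigma> x) differentiable (at \<tau>)"
    using assms unfolding is_cauchy_solution_def C12_hoelder_loc_def by auto
  then show ?thesis
    using assms DERIV_deriv_iff_real_differentiable unfolding is_cauchy_solution_def dt_def by metis
qed

text \<open>The pointwise inequality behind the barrier \<open>E \<tau> * (\<phi> y + M * (\<tau> - s))\<close>
  with \<open>E \<tau> = a * exp (\<gamma> * (\<tau> - s))\<close>: its time derivative is the bracket on the left.\<close>

lemma barrier_difference_subsolution:
  assumes "C2 u" "C2 \<phi>" and "\<phi> y > 0" and "Aop Q b c \<tau> \<phi> y \<le> M" and "M \<ge> 0"
    and "c \<tau> y \<ge> - \<gamma>" and "\<gamma> \<ge> 0" and "E > 0" and "\<tau> \<ge> s"
  shows "Aop Q b c \<tau> u y - (E * \<gamma> * \<phi> y + E * \<gamma> * M * (\<tau> - s) + E * M)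
    \<le> Aop Q b c \<tau> (\<lambda>z. u z - (E * \<phi> z + E * M * (\<tau> - s))) y"
proof -
  have "Aop Q b c \<tau> \<phi> y - c \<tau> y * (M * (\<tau> - s)) \<le> \<gamma> * \<phi> y + \<gamma> * M * (\<tau> - s) + M"
  proof -
    have "(\<gamma> + c \<tau> y) * (M * (\<tau> - s)) \<ge> 0"
      using assms by (intro mult_nonneg_nonneg) auto
    moreover have "\<gamma> * \<phi> y \<ge> 0" using assms by simp
    ultimately show ?thesis using assms(4) by (simp add: algebra_simps)
  qed
  from mult_left_mono[OF this, of E] \<open>E > 0\<close> show ?thesis
    unfolding Aop_diff_affine[OF assms(1,2)] by (simp add: algebra_simps)
qed

text \<open>The growth of \<open>\<phi>\<close> at infinity dominates the bounded solution, which provides the decay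
  hypothesis of the maximum principle.\<close>

lemma cauchy_solution_le_barrier:
  fixes U :: "real \<Rightarrow> real^'d::finite \<Rightarrow> real"
  assumes U: "is_cauchy_solution \<alpha> Q b c s f U" and "s \<le> T"
    and \<phi>: "C2 \<phi>" "\<And>x. \<phi> x > 0" "filterlim \<phi> at_top at_infinity"
    and \<phi>_Aop: "\<And>\<tau> x. \<tau> \<in> {s<..T} \<Longrightarrow> Aop Q b c \<tau> \<phi> x \<le> M"
    and "M \<ge> 0" "a > 0" "\<gamma> \<ge> 0"
    and initial: "\<And>x. f x \<le> a * \<phi> x"
    and Q_sym: "\<And>\<tau> x i j. \<tau> \<in> {s<..T} \<Longrightarrow> Q \<tau> x $ i $ j = Q \<tau> x $ j $ i"
    and Q_psd: "\<And>\<tau> x v. \<tau> \<in> {s<..T} \<Longrightarrow> v \<bullet> (Q \<tau> x *v v) \<ge> 0"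
    and c_below: "\<And>\<tau> x. \<tau> \<in> {s<..T} \<Longrightarrow> c \<tau> x \<ge> - \<gamma>"
  shows "U T x \<le> a * exp (\<gamma> * (T - s)) * (\<phi> x + M * (T - s))"
proof -
  define E where "E \<tau> = a * exp (\<gamma> * (\<tau> - s))" for \<tau>
  have E_ge: "E \<tau> \<ge> a" if "\<tau> \<ge> s" for \<tau>
    unfolding E_def using \<open>a > 0\<close> \<open>\<gamma> \<ge> 0\<close> that by simp
  define w where "w \<tau> y = U \<tau> y - (E \<tau> * \<phi> y + E \<tau> * M * (\<tau> - s))" for \<tau> y
  have U_cont: "continuous_on ({s..} \<times> UNIV) (\<lambda>(t, x). U t x)"
    and "bounded ((\<lambda>(t, x). U t x) ` ({s..T} \<times> UNIV))" and "U s = f"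
    using U by (auto simp: is_cauchy_solution_def)
  then obtain B where B: "\<And>\<tau> y. \<tau> \<in> {s..T} \<Longrightarrow> \<bar>U \<tau> y\<bar> \<le> B"
    unfolding bounded_real by force
  obtain r where r: "\<And>y. norm y \<ge> r \<Longrightarrow> \<phi> y \<ge> B / a"
    using \<phi>(3) unfolding filterlim_at_top eventually_at_infinity by blast
  have w_deriv: "((\<lambda>\<sigma>. w \<sigma> y) has_real_derivative Aop Q b c \<tau> (U \<tau>) y
      - (E \<tau> * \<gamma> * \<phi> y + E \<tau> * \<gamma> * M * (\<tau> - s) + E \<tau> * M)) (at \<tau>)" if "\<tau> > s" for \<tau> y
    unfolding w_def E_def
    by (auto intro!: derivative_eq_intros cauchy_solution_has_time_derivative[OF U that]
        simp: algebra_simps)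
  have "w T x \<le> 0"
  proof (rule parabolic_max_principle[where w = w and s = s and T = T and r = r and Q = Q and b = b
        and c = c and c_min = "- \<gamma>"])
    have "continuous_on ({s..T} \<times> UNIV) (\<lambda>(t, x). U t x)"
      by (rule continuous_on_subset[OF U_cont]) auto
    moreover have "continuous_on ({s..T} \<times> UNIV) (\<lambda>p. \<phi> (snd p))"
      using \<phi>(1) unfolding C2_def by (auto intro: continuous_on_compose2[OF _ continuous_on_snd])
    ultimately have "continuous_on ({s..T} \<times> UNIV)
        (\<lambda>p. (\<lambda>(t, x). U t x) p - (E (fst p) * \<phi> (snd p) + E (fst p) * M * (fst p - s)))"
      unfolding E_def by (intro continuous_intros)
    then show "continuous_on ({s..T} \<times> UNIV) (\<lambda>(t, x). w t x)"
      by (simp add: w_def case_prod_beta')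
    show "w s y \<le> 0" for y
      using initial[of y] \<open>U s = f\<close> by (simp add: w_def E_def)
    show "w \<tau> y \<le> 0" if "\<tau> \<in> {s..T}" "norm y \<ge> r" for \<tau> y
    proof -
      have "U \<tau> y \<le> a * \<phi> y"
        using abs_le_D1[OF B[OF that(1), of y]] r[OF that(2)] \<open>a > 0\<close> by (simp add: field_simps)
      also have "\<dots> \<le> E \<tau> * \<phi> y" using E_ge[of \<tau>] that(1) \<phi>(2)[of y] by (simp add: mult_right_mono)
      also have "\<dots> \<le> E \<tau> * \<phi> y + E \<tau> * M * (\<tau> - s)"
        using E_ge[of \<tau>] that(1) \<open>a > 0\<close> \<open>M \<ge> 0\<close> by simp
      finally show ?thesis by (simp add: w_def)
    qed
    show "C2 (w \<tau>)" if "\<tau> \<in> {s<..T}" for \<tau>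
      unfolding w_def using that by (simp add: C2_diff_affine cauchy_solution_C2[OF U] \<phi>(1))
    show "(\<lambda>\<sigma>. w \<sigma> y) differentiable (at \<tau>)" if "\<tau> \<in> {s<..T}" for \<tau> y
      using w_deriv that unfolding real_differentiable_def by fastforce
    show "dt w \<tau> y \<le> Aop Q b c \<tau> (w \<tau>) y" if "\<tau> \<in> {s<..T}" for \<tau> y
      using DERIV_imp_deriv[OF w_deriv] that unfolding dt_def w_def
      by (simp add: barrier_difference_subsolution cauchy_solution_C2[OF U] \<phi> \<phi>_Aop \<open>M \<ge> 0\<close>
          c_below \<open>\<gamma> \<ge> 0\<close> \<open>a > 0\<close> E_def)
  qed (use Q_sym Q_psd c_below \<open>s \<le> T\<close> in auto)
  then show ?thesis by (simp add: w_def E_def algebra_simps)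
qed

lemma emeasure_gmeas_diagonal_outside_ball:
  assumes "norm x < M"
  shows "emeasure (gmeas g s s x) (UNIV - ball 0 M) = 0"
  using assms by (simp add: gmeas_def)

lemma emeasure_gmeas_outside_ball_le_integral:
  assumes "t \<noteq> s" and "g t s x \<in> borel_measurable lborel" and "\<And>y. g t s x y \<ge> 0"
    and "integrable lborel (\<lambda>y. g t s x y * f y)"
    and "\<And>y. f y \<ge> 0" and "\<And>y. norm y \<ge> M \<Longrightarrow> f y \<ge> 1"
  shows "emeasure (gmeas g t s x) (UNIV - ball 0 M) \<le> ennreal (\<integral>y. g t s x y * f y \<partial>lborel)"
proof -
  have "emeasure (gmeas g t s x) (UNIV - ball 0 M)
      = (\<integral>\<^sup>+ y. ennreal (g t s x y) * indicator (UNIV - ball 0 M) y \<partial>lborel)"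
    using assms(1,2) by (simp add: gmeas_def emeasure_density)
  also have "\<dots> \<le> (\<integral>\<^sup>+ y. ennreal (g t s x y * f y) \<partial>lborel)"
  proof (rule nn_integral_mono)
    fix y :: "real^'a"
    show "ennreal (g t s x y) * indicator (UNIV - ball 0 M) y \<le> ennreal (g t s x y * f y)"
    proof (cases "norm y < M")
      case False
      then have "g t s x y * 1 \<le> g t s x y * f y"
        using assms(3,6)[of y] by (intro mult_left_mono) auto
      with False show ?thesis by (simp add: dist_norm ennreal_leI)
    qed simp
  qed
  also have "\<dots> = ennreal (\<integral>y. g t s x y * f y \<partial>lborel)"
    using assms(3-5) by (intro nn_integral_eq_integral AE_I2) auto
  finally show ?thesis .
qed

lemma exists_barrier_scale:
  fixes \<phi> :: "real^'d::finite \<Rightarrow> real"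
  assumes "continuous_on UNIV \<phi>" "\<And>x. \<phi> x > 0" "filterlim \<phi> at_top at_infinity"
    and "bounded J" "\<epsilon> > 0" "\<gamma> \<ge> 0" "K \<ge> 0"
  obtains a M where "a > 0" "M > R" "\<And>y. norm y \<ge> M \<Longrightarrow> a * \<phi> y \<ge> 1"
    "\<And>s t x. s \<in> J \<Longrightarrow> t \<in> J \<Longrightarrow> s \<le> t \<Longrightarrow> norm x \<le> R \<Longrightarrow>
       a * exp (\<gamma> * (t - s)) * (\<phi> x + K * (t - s)) \<le> \<epsilon>"
proof -
  obtain B where B: "\<And>t. t \<in> J \<Longrightarrow> \<bar>t\<bar> \<le> B"
    using \<open>bounded J\<close> unfolding bounded_real by blast
  have "compact (\<phi> ` cball 0 R)"
    using assms(1)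
    by (intro compact_continuous_image compact_cball) (auto intro: continuous_on_subset)
  then obtain \<Phi> where \<Phi>: "\<And>x. norm x \<le> R \<Longrightarrow> \<phi> x \<le> \<Phi>"
    unfolding compact_eq_bounded_closed bounded_real by (meson abs_le_D1 image_eqI mem_cball_0)
  define C where "C = exp (\<gamma> * (2 * B)) * (\<Phi> + K * (2 * B))"
  define a where "a = \<epsilon> / (\<bar>C\<bar> + 1)"
  have "a > 0" using \<open>\<epsilon> > 0\<close> by (simp add: a_def)
  have "a * C \<le> \<epsilon>"
  proof -
    have "a * C \<le> a * (\<bar>C\<bar> + 1)" using \<open>a > 0\<close> by (intro mult_left_mono) auto
    then show ?thesis using \<open>\<epsilon> > 0\<close> by (simp add: a_def)
  qed
  obtain M0 where M0: "\<And>y. norm y \<ge> M0 \<Longrightarrow> \<phi> y \<ge> 1 / a"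
    using assms(3) unfolding filterlim_at_top eventually_at_infinity by blast
  show ?thesis
  proof
    show "max (R + 1) M0 > R" by simp
    show "a * \<phi> y \<ge> 1" if "norm y \<ge> max (R + 1) M0" for y
      using M0[of y] that \<open>a > 0\<close> by (simp add: field_simps)
    show "a * exp (\<gamma> * (t - s)) * (\<phi> x + K * (t - s)) \<le> \<epsilon>"
      if "s \<in> J" "t \<in> J" "s \<le> t" "norm x \<le> R" for s t x
    proof -
      have "t - s \<le> 2 * B" using B[OF that(1)] B[OF that(2)] by linarith
      then have "\<gamma> * (t - s) \<le> \<gamma> * (2 * B)" using \<open>\<gamma> \<ge> 0\<close> by (rule mult_left_mono)
      with \<open>t - s \<le> 2 * B\<close> have "exp (\<gamma> * (t - s)) * (\<phi> x + K * (t - s)) \<le> C"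
        unfolding C_def using \<Phi>[OF that(4)] assms(2)[of x] that(3) \<open>\<gamma> \<ge> 0\<close> \<open>K \<ge> 0\<close>
        by (intro mult_mono add_mono mult_left_mono) auto
      with \<open>a > 0\<close> \<open>a * C \<le> \<epsilon>\<close> show ?thesis
        by (smt (verit) mult.assoc mult_left_mono)
    qed
  qed (use \<open>a > 0\<close> in auto)
qed

lemma gmeas_tail_le_barrier:
  fixes g :: "real \<Rightarrow> real \<Rightarrow> real^'d::finite \<Rightarrow> real^'d \<Rightarrow> real"
    and \<phi> :: "real^'d \<Rightarrow> real" and a :: real
  defines "f \<equiv> \<lambda>y. min 1 (a * \<phi> y)"
  assumes "s < t"
    and green: "is_cauchy_solution \<alpha> Q b c s f
      (\<lambda>t x. if t = s then f x else (\<integral>y. g t s x y * f y \<partial>lborel))"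
    and g: "g t s x \<in> borel_measurable lborel" "\<And>y. g t s x y > 0"
      "integrable lborel (\<lambda>y. g t s x y * f y)"
    and \<phi>: "C2 \<phi>" "\<And>x. \<phi> x > 0" "filterlim \<phi> at_top at_infinity"
    and \<phi>_Aop: "\<And>\<tau> x. \<tau> \<in> {s<..t} \<Longrightarrow> Aop Q b c \<tau> \<phi> x \<le> K"
    and far: "\<And>y. norm y \<ge> M \<Longrightarrow> a * \<phi> y \<ge> 1"
    and "K \<ge> 0" "a > 0" "\<gamma> \<ge> 0"
    and Q_sym: "\<And>\<tau> x i j. \<tau> \<in> {s<..t} \<Longrightarrow> Q \<tau> x $ i $ j = Q \<tau> x $ j $ i"
    and Q_psd: "\<And>\<tau> x v. \<tau> \<in> {s<..t} \<Longrightarrow> v \<bullet> (Q \<tau> x *v v) \<ge> 0"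
    and c_below: "\<And>\<tau> x. \<tau> \<in> {s<..t} \<Longrightarrow> c \<tau> x \<ge> - \<gamma>"
  shows "emeasure (gmeas g t s x) (UNIV - ball 0 M)
    \<le> ennreal (a * exp (\<gamma> * (t - s)) * (\<phi> x + K * (t - s)))"
proof -
  have "emeasure (gmeas g t s x) (UNIV - ball 0 M) \<le> ennreal (\<integral>y. g t s x y * f y \<partial>lborel)"
    using \<open>s < t\<close> g far \<open>a > 0\<close> \<phi>(2)
    by (intro emeasure_gmeas_outside_ball_le_integral) (auto simp: f_def less_imp_le)
  also have "(\<integral>y. g t s x y * f y \<partial>lborel) \<le> a * exp (\<gamma> * (t - s)) * (\<phi> x + K * (t - s))"
    using cauchy_solution_le_barrier[OF green less_imp_le[OF \<open>s < t\<close>] \<phi> \<phi>_Aop \<open>K \<ge> 0\<close> \<open>a > 0\<close>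
        \<open>\<gamma> \<ge> 0\<close> _ Q_sym Q_psd c_below] \<open>s < t\<close>
    by (simp add: f_def)
  finally show ?thesis by (simp add: ennreal_leI)
qed

theorem proposition4p9:
  fixes \<alpha> :: real
    and I :: "real set"
    and Q :: "real \<Rightarrow> real^'d::finite \<Rightarrow> real^'d^'d"
    and b :: "real \<Rightarrow> real^'d \<Rightarrow> real^'d"
    and c :: "real \<Rightarrow> real^'d \<Rightarrow> real"
    and \<eta> :: "real \<Rightarrow> real^'d \<Rightarrow> real"
    and g :: "real \<Rightarrow> real \<Rightarrow> real^'d \<Rightarrow> real^'d \<Rightarrow> real"
  assumes alpha: "0 < \<alpha>" "\<alpha> < 1"
    and I_shape: "I = UNIV \<or> (\<exists>a. I = {a..} \<or> I = {a<..})"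
    and Q_hoelder: "\<And>i j. hoelder_loc \<alpha> (I \<times> UNIV) (\<lambda>t x. Q t x $ i $ j)"
    and b_hoelder: "\<And>i. hoelder_loc \<alpha> (I \<times> UNIV) (\<lambda>t x. b t x $ i)"
    and c_hoelder: "hoelder_loc \<alpha> (I \<times> UNIV) c"
    and c_below: "\<exists>c0. \<forall>t\<in>I. \<forall>x. c t x \<ge> c0"
    and Q_sym: "\<And>t x i j. t \<in> I \<Longrightarrow> Q t x $ i $ j = Q t x $ j $ i"
    and Q_ell: "\<And>t x \<xi>. t \<in> I \<Longrightarrow> \<xi> \<bullet> (Q t x *v \<xi>) \<ge> \<eta> t x * (norm \<xi>)\<^sup>2"
    and eta_pos: "\<exists>\<eta>0>0. \<forall>t\<in>I. \<forall>x. \<eta> t x \<ge> \<eta>0"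
    and Lyap: "\<And>J. J \<subseteq> I \<Longrightarrow> bounded_interval J \<Longrightarrow>
        \<exists>\<phi> lam. C2 \<phi> \<and> (\<forall>x. \<phi> x > 0) \<and> filterlim \<phi> at_top at_infinity
          \<and> (\<forall>t\<in>J. \<forall>x. Aop Q b c t \<phi> x \<le> lam * \<phi> x)"
    and g_pos: "\<And>t s x y. s \<in> I \<Longrightarrow> t > s \<Longrightarrow> g t s x y > 0"
    and g_meas: "\<And>t s x. s \<in> I \<Longrightarrow> t > s \<Longrightarrow> g t s x \<in> borel_measurable lborel"
    and g_green: "\<And>s f. s \<in> I \<Longrightarrow> Cb f \<Longrightarrow>
        (\<forall>t x. t > s \<longrightarrow> integrable lborel (\<lambda>y. g t s x y * f y))
        \<and> is_cauchy_solution \<alpha> Q b c s f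
            (\<lambda>t x. if t = s then f x else (\<integral>y. g t s x y * f y \<partial>lborel))"
    and H1: "\<And>J. J \<subseteq> I \<Longrightarrow> bounded_interval J \<Longrightarrow>
        \<exists>\<psi> lam. C2 \<psi> \<and> (\<forall>x. \<psi> x > 0) \<and> filterlim \<psi> at_top at_infinity
          \<and> (\<forall>t\<in>J. \<forall>x. Aop_mc Q b c t \<psi> x - lam * \<psi> x \<le> 0)"
    and H2: "\<And>J. J \<subseteq> I \<Longrightarrow> bounded_interval J \<Longrightarrow>
        \<exists>\<phi> M. C2 \<phi> \<and> (\<forall>x. \<phi> x > 0) \<and> filterlim \<phi> at_top at_infinity \<and> M > 0
          \<and> (\<forall>t\<in>J. \<forall>x. Aop Q b c t \<phi> x \<le> M)"
  shows "\<forall>J. J \<subseteq> I \<and> bounded_interval J \<longrightarrow>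
           (\<forall>R>0. \<forall>\<epsilon>>0. \<exists>M>0. \<forall>t s x. s \<in> J \<and> t \<in> J \<and> t \<ge> s \<and> norm x \<le> R \<longrightarrow>
              emeasure (gmeas g t s x) (UNIV - ball 0 M) \<le> ennreal \<epsilon>)"
proof (intro allI impI)
  fix J :: "real set" and R \<epsilon> :: real
  assume "J \<subseteq> I \<and> bounded_interval J" and "R > 0" and "\<epsilon> > 0"
  then have JI: "J \<subseteq> I" and "bounded_interval J" by auto
  then have J: "is_interval J" "bounded J" by (auto simp: bounded_interval_def)
  obtain \<phi> K where \<phi>: "C2 \<phi>" "\<And>x. \<phi> x > 0" "filterlim \<phi> at_top at_infinity"
    and "K > 0" and \<phi>_Aop: "\<And>t x. t \<in> J \<Longrightarrow> Aop Q b c t \<phi> x \<le> K"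
    using H2[OF JI] \<open>bounded_interval J\<close> by blast
  obtain c0 where c0: "\<And>t x. t \<in> I \<Longrightarrow> c t x \<ge> c0" using c_below by blast
  define \<gamma> where "\<gamma> = max 0 (- c0)"
  obtain a M where "a > 0" "M > R" and far: "\<And>y. norm y \<ge> M \<Longrightarrow> a * \<phi> y \<ge> 1"
    and small: "\<And>s t x. s \<in> J \<Longrightarrow> t \<in> J \<Longrightarrow> s \<le> t \<Longrightarrow> norm x \<le> R \<Longrightarrow>
       a * exp (\<gamma> * (t - s)) * (\<phi> x + K * (t - s)) \<le> \<epsilon>"
    using exists_barrier_scale[of \<phi> J \<epsilon> \<gamma> K R] \<phi> J \<open>\<epsilon> > 0\<close> \<open>K > 0\<close>
    by (auto simp: \<gamma>_def C2_def)
  define f where "f y = min 1 (a * \<phi> y)" for y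
  have "Cb f"
    using \<phi>(1) unfolding Cb_def C2_def bounded_iff
    by (auto intro!: continuous_on_min continuous_on_mult_left continuous_on_const exI[of _ 1]
        simp: f_def \<open>a > 0\<close> \<phi>(2) less_imp_le)
  have "emeasure (gmeas g t s x) (UNIV - ball 0 M) \<le> ennreal \<epsilon>"
    if "s \<in> J" "t \<in> J" "s \<le> t" "norm x \<le> R" for t s x
  proof (cases "t = s")
    case False
    with that JI have "s < t" "s \<in> I" by auto
    have strip: "\<tau> \<in> I" "\<tau> \<in> J" if "\<tau> \<in> {s<..t}" for \<tau>
      using J(1) \<open>s \<in> J\<close> \<open>t \<in> J\<close> JI that unfolding is_interval_1
      by (meson greaterThanAtMost_iff less_imp_le subsetD)+
    have "emeasure (gmeas g t s x) (UNIV - ball 0 M)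
        \<le> ennreal (a * exp (\<gamma> * (t - s)) * (\<phi> x + K * (t - s)))"
    proof (rule gmeas_tail_le_barrier[where \<alpha> = \<alpha> and Q = Q and b = b and c = c and \<phi> = \<phi>
          and a = a and K = K, OF \<open>s < t\<close>])
      show "v \<bullet> (Q \<tau> y *v v) \<ge> 0" if "\<tau> \<in> {s<..t}" for \<tau> y v
        using Q_ell[OF strip(1)[OF that], of y v] eta_pos strip(1)[OF that]
        by (smt (verit) mult_nonneg_nonneg zero_le_power2)
      show "c \<tau> y \<ge> - \<gamma>" if "\<tau> \<in> {s<..t}" for \<tau> y
        using c0[OF strip(1)[OF that], of y] by (simp add: \<gamma>_def)
    qed (use g_green[OF \<open>s \<in> I\<close> \<open>Cb f\<close>, unfolded f_def] g_meas g_pos \<open>s \<in> I\<close> \<open>s < t\<close>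
        \<phi> \<phi>_Aop far Q_sym strip \<open>K > 0\<close> \<open>a > 0\<close> in \<open>auto simp: \<gamma>_def\<close>)
    then show ?thesis using small[OF that] by (simp add: ennreal_leI order_trans)
  qed (use that \<open>M > R\<close> in \<open>simp add: emeasure_gmeas_diagonal_outside_ball\<close>)
  then show "\<exists>M>0. \<forall>t s x. s \<in> J \<and> t \<in> J \<and> t \<ge> s \<and> norm x \<le> R \<longrightarrow>
           emeasure (gmeas g t s x) (UNIV - ball 0 M) \<le> ennreal \<epsilon>"
    using \<open>M > R\<close> \<open>R > 0\<close> by (intro exI[of _ M]) auto
qed

end
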